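(* Let $\mathfrak B_r^-$ and $\mathfrak B_r^+$ be the branches of the discrete Neumann correspondence $\mathfrak B_r$ (with the same $\lambda_*$ and the same choice of $A^{1/2}(\lambda_* )$) corresponding to opposite partitions $\mathbf w_-=\{w_1,\dots,w_r\mid-w_1,\dots,-w_r\}$ and $\mathbf w_+=\{-w_1,\dots,-w_r\mid w_1,\dots,w_r\}$ of the eigenvalues of $L(\lambda_* )$. Then for every initial point $(X,P)\in T^*V_{n,r}$, $$\mathfrak B_r^-\circ\mathfrak B_r^+(X,P)=(-X,-P).$$
   Context: $A=\mathrm{diag}(a_1,\dots,a_n)$, $A(\lambda)=\lambda\mathbf I_n-A$, $\lambda_*\ne a_i$, $A^{1/2}(\lambda_* )$ a fixed diagonal square root. $T^*V_{n,r}=\{(X,P): X^TX=\mathbf I_r,\ X^TP+P^TX=0\}$. $L(\lambda)=\begin{pmatrix} X^TA(\lambda)^{-1}P & X^TA(\lambda)^{-1}X\\ \mathbf I_r-P^TA(\lambda)^{-1}P & -P^TA(\lambda)^{-1}X\end{pmatrix}$; its eigenvalues at $\lambda_*$ come in pairs $\pm w$, and its spectrum is preserved by the map. A partition $\{w_1,\dots,w_r\mid-w_1,\dots,-w_r\}$ chooses $r$ eigenvalues $w_1,\dots,w_r$ of $L(\lambda_* )$, distinct with $w_i\ne-w_j$; with $\begin{pmatrix}\Xi\\ \Upsilon\end{pmatrix}$ the matrix of corresponding eigenvectors, $\Gamma=\Upsilon\Xi^{-1}$ is a symmetric solution of $\Gamma\mathbf U\Gamma+\Gamma\mathbf V+\mathbf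 V^T\Gamma-\mathbf W=0$ ($\mathbf U=X^TA^{-1}(\lambda_* )X$, $\mathbf V=X^TA^{-1}(\lambda_* )P$, $\mathbf W=\mathbf I_r-P^TA^{-1}(\lambda_* )P$), and the branch of $\mathfrak B_r$ for this partition is $\tilde X=A^{-1/2}(\lambda_* )(P+X\Gamma)$, $\tilde P=-A^{1/2}(\lambda_* )X+\tilde X\Gamma$. The partition is applied at each step to the eigenvalues of the current Lax matrix at $\lambda_*$. *)

theory Defs
  imports "Jordan_Normal_Form.Matrix" "Jordan_Normal_Form.Determinant"
begin

definition Amat :: "nat \<Rightarrow> (nat \<Rightarrow> real) \<Rightarrow> real \<Rightarrow> complex mat" where
  "Amat n a lam = mat n n (\<lambda>(i,j). if i = j then complex_of_real (lam - a i) else 0)"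

definition Ainv :: "nat \<Rightarrow> (nat \<Rightarrow> real) \<Rightarrow> real \<Rightarrow> complex mat" where
  "Ainv n a lam = mat n n (\<lambda>(i,j). if i = j then complex_of_real (1 / (lam - a i)) else 0)"

definition diag_inv :: "complex mat \<Rightarrow> complex mat" where
  "diag_inv S = mat (dim_row S) (dim_col S) (\<lambda>(i,j). if i = j then 1 / S $$ (i,i) else 0)"

definition Lax :: "nat \<Rightarrow> nat \<Rightarrow> (nat \<Rightarrow> real) \<Rightarrow> real \<Rightarrow> complex mat \<Rightarrow> complex mat \<Rightarrow> complex mat" where
  "Lax n r a lam X P =
     four_block_mat
       (transpose_mat X * Ainv n a lam * P) (transpose_mat X * Ainv n a lam * X)
       (1\<^sub>m r - transpose_mat P * Ainv n a lam * P) (- (transpose_mat P * Ainv n a lam * X))"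

definition diag_of :: "nat \<Rightarrow> (nat \<Rightarrow> complex) \<Rightarrow> complex mat" where
  "diag_of r w = mat r r (\<lambda>(i,j). if i = j then w i else 0)"

text \<open>Branch of the discrete Neumann correspondence B_r for the partition choosing the
  eigenvalues w 0, ..., w (r-1) of the current Lax matrix L(lam):
  [Xi; Upsilon] is the matrix whose columns are eigenvectors for w 0..w (r-1),
  Gamma = Upsilon Xi^{-1}, and (X,P) is mapped to (X', P').\<close>
definition neumann_branch ::
  "nat \<Rightarrow> nat \<Rightarrow> (nat \<Rightarrow> real) \<Rightarrow> real \<Rightarrow> complex mat \<Rightarrow> (nat \<Rightarrow> complex) \<Rightarrow>
   complex mat \<Rightarrow> complex mat \<Rightarrow> complex mat \<Rightarrow> complex mat \<Rightarrow> bool" where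
  "neumann_branch n r a lam S w X P X' P' \<longleftrightarrow>
     (\<exists>Xi Ups Xiinv. Xi \<in> carrier_mat r r \<and> Ups \<in> carrier_mat r r \<and> Xiinv \<in> carrier_mat r r \<and>
        Xi * Xiinv = 1\<^sub>m r \<and> Xiinv * Xi = 1\<^sub>m r \<and>
        Lax n r a lam X P * (Xi @\<^sub>r Ups) = (Xi @\<^sub>r Ups) * diag_of r w \<and>
        (let Gam = Ups * Xiinv in
          X' = diag_inv S * (P + X * Gam) \<and>
          P' = - (S * X) + X' * Gam))"

end

theory Submission
  imports Defs
begin

text \<open>The first branch uses \<open>\<Gamma> = \<Upsilon> \<Xi>\<inverse>\<close>, a symmetric solution of the Riccati equation, and the
  closed-loop matrix \<open>M = X\<^sup>T A\<inverse> (P + X \<Gamma>)\<close> then has eigenvalues \<open>-w\<^sub>i\<close> with eigenvector matrix \<open>\<Xi>\<close>.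
  At the new point \<open>(X', P')\<close> the map \<open>(\<xi>, \<upsilon>) \<mapsto> \<upsilon> + \<Gamma> \<xi>\<close> intertwines the Lax matrix with \<open>M\<close>.
  The second branch takes eigenvectors of the new Lax matrix for \<open>w\<^sub>i\<close>; as these are not eigenvalues
  of \<open>M\<close>, the intertwiner kills them, so the second branch uses \<open>-\<Gamma>\<close>, and with \<open>-\<Gamma>\<close> the branch
  formulas give back \<open>(-X, -P)\<close>.\<close>

lemma diag_of_carrier [simp]: "diag_of r d \<in> carrier_mat r r"
  by (simp add: diag_of_def)

lemma dim_diag_of [simp]: "dim_row (diag_of r d) = r" "dim_col (diag_of r d) = r"
  by (simp_all add: diag_of_def)

lemma index_mult_diag_of:
  assumes "E \<in> carrier_mat m r" "i < m" "j < r"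
  shows "(E * diag_of r d) $$ (i, j) = E $$ (i, j) * d j"
proof -
  have "(E * diag_of r d) $$ (i, j) = (\<Sum>k<r. E $$ (i, k) * (if k = j then d k else 0))"
    using assms by (simp add: diag_of_def scalar_prod_def lessThan_atLeast0 cong: if_cong)
  then show ?thesis
    using assms by (simp add: if_distrib cong: if_cong)
qed

lemma index_diag_of_mult:
  assumes "E \<in> carrier_mat m r" "i < m" "j < r"
  shows "(diag_of m d * E) $$ (i, j) = d i * E $$ (i, j)"
proof -
  have "(diag_of m d * E) $$ (i, j) = (\<Sum>k<m. (if i = k then d i else 0) * E $$ (k, j))"
    using assms by (simp add: diag_of_def scalar_prod_def lessThan_atLeast0 cong: if_cong)
  also have "\<dots> = (\<Sum>k<m. if k = i then d i * E $$ (i, j) else 0)"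
    by (rule sum.cong) auto
  finally show ?thesis
    using assms by simp
qed

lemma diag_of_mult_diag_of: "diag_of n f * diag_of n g = diag_of n (\<lambda>i. f i * g i)"
proof (rule eq_matI)
  fix i j assume "i < dim_row (diag_of n (\<lambda>i. f i * g i))" "j < dim_col (diag_of n (\<lambda>i. f i * g i))"
  then have i: "i < n" and j: "j < n" by auto
  show "(diag_of n f * diag_of n g) $$ (i, j) = diag_of n (\<lambda>i. f i * g i) $$ (i, j)"
    using index_mult_diag_of[OF diag_of_carrier i j] i j by (simp add: diag_of_def)
qed auto

lemma transpose_diag_of [simp]: "transpose_mat (diag_of n f) = diag_of n f"
  by (rule eq_matI) (auto simp: diag_of_def)

lemma diag_of_uminus: "diag_of n (\<lambda>i. - f i) = - diag_of n f"
  by (rule eq_matI) (auto simp: diag_of_def)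

lemma diag_of_eq_one_mat: "(\<And>i. i < n \<Longrightarrow> f i = 1) \<Longrightarrow> diag_of n f = 1\<^sub>m n"
  by (rule eq_matI) (auto simp: diag_of_def)

lemma diagonal_mat_eq_diag_of:
  assumes "S \<in> carrier_mat n n" "diagonal_mat S"
  shows "S = diag_of n (\<lambda>i. S $$ (i, i))"
  using assms by (intro eq_matI) (auto simp: diag_of_def diagonal_mat_def)

lemma sylvester_diag_of_eq_zero:
  assumes E: "E \<in> carrier_mat m r"
    and eq: "E * diag_of r d = diag_of m e * E"
    and spec: "\<forall>i<m. \<forall>j<r. e i \<noteq> d j"
  shows "E = 0\<^sub>m m r"
proof (rule eq_matI)
  fix i j assume "i < dim_row (0\<^sub>m m r :: complex mat)" "j < dim_col (0\<^sub>m m r :: complex mat)"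
  then have i: "i < m" and j: "j < r" by auto
  have "E $$ (i, j) * d j = e i * E $$ (i, j)"
    using arg_cong[OF eq, of "\<lambda>M. M $$ (i, j)"] index_mult_diag_of[OF E i j] index_diag_of_mult[OF E i j]
    by simp
  then have "E $$ (i, j) * (e i - d j) = 0"
    by (metis mult.commute right_diff_distrib right_minus_eq)
  moreover have "e i - d j \<noteq> 0"
    using spec i j by auto
  ultimately show "E $$ (i, j) = 0\<^sub>m m r $$ (i, j)"
    using i j by simp
qed (use E in auto)

text \<open>The ring laws of the matrix library with dimension equations in place of carrier hypotheses,
  so that the simplifier can discharge their side conditions from dimension facts.\<close>

lemma carrier_mat_dims: "A \<in> carrier_mat (dim_row A) (dim_col A)"
  by (rule carrier_matI) auto

lemma assoc_mult_mat_dim: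
  "dim_col A = dim_row B \<Longrightarrow> dim_col B = dim_row C \<Longrightarrow> A * B * C = A * (B * C)"
  by (rule assoc_mult_mat[OF carrier_mat_dims, of B _ "dim_col B" C "dim_col C"]) auto

lemma mult_add_distrib_mat_dim:
  "dim_col A = dim_row B \<Longrightarrow> dim_row B = dim_row C \<Longrightarrow> dim_col B = dim_col C \<Longrightarrow>
    A * (B + C) = A * B + A * C"
  by (rule mult_add_distrib_mat[OF carrier_mat_dims, of B _ "dim_col B" C]) auto

lemma add_mult_distrib_mat_dim:
  "dim_row A = dim_row B \<Longrightarrow> dim_col A = dim_col B \<Longrightarrow> dim_col A = dim_row C \<Longrightarrow>
    (A + B) * C = A * C + B * C"
  by (rule add_mult_distrib_mat[OF carrier_mat_dims, where B = B and C = C and nc = "dim_col C"]) auto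

lemma mult_minus_distrib_mat_dim:
  fixes A :: "'a :: ring mat"
  shows "dim_col A = dim_row B \<Longrightarrow> dim_row B = dim_row C \<Longrightarrow> dim_col B = dim_col C \<Longrightarrow>
    A * (B - C) = A * B - A * C"
  by (rule mult_minus_distrib_mat[OF carrier_mat_dims, of B _ "dim_col B" C]) auto

lemma minus_mult_distrib_mat_dim:
  fixes A :: "'a :: ring mat"
  shows "dim_row A = dim_row B \<Longrightarrow> dim_col A = dim_col B \<Longrightarrow> dim_col A = dim_row C \<Longrightarrow>
    (A - B) * C = A * C - B * C"
  by (rule minus_mult_distrib_mat[OF carrier_mat_dims, where B = B and C = C and nc = "dim_col C"]) auto

lemma transpose_mult_dim:
  fixes A :: "'a :: comm_semiring_0 mat"
  shows "dim_col A = dim_row B \<Longrightarrow> transpose_mat (A * B) = transpose_mat B * transpose_mat A"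
  by (rule transpose_mult[OF carrier_mat_dims, of B _ "dim_col B"]) auto

lemma transpose_add_dim:
  "dim_row A = dim_row B \<Longrightarrow> dim_col A = dim_col B \<Longrightarrow>
    transpose_mat (A + B) = transpose_mat A + transpose_mat B"
  by (rule transpose_add[OF carrier_mat_dims, of B]) auto

lemma transpose_minus_dim:
  "dim_row A = dim_row B \<Longrightarrow> dim_col A = dim_col B \<Longrightarrow>
    transpose_mat (A - B) = transpose_mat A - transpose_mat B"
  by (rule transpose_minus[OF carrier_mat_dims, of B]) auto

lemmas mat_dim_algebra = assoc_mult_mat_dim mult_add_distrib_mat_dim add_mult_distrib_mat_dim
  mult_minus_distrib_mat_dim minus_mult_distrib_mat_dim transpose_mult_dim transpose_add_dim
  transpose_minus_dim transpose_uminus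

lemma add_eq_0_mat_imp_eq_uminus:
  fixes A B :: "'a :: group_add mat"
  assumes "A \<in> carrier_mat n m" "B \<in> carrier_mat n m" "A + B = 0\<^sub>m n m"
  shows "A = - B"
proof (rule eq_matI)
  fix i j assume "i < dim_row (- B)" "j < dim_col (- B)"
  then show "A $$ (i, j) = (- B) $$ (i, j)"
    using arg_cong[OF assms(3), of "\<lambda>M. M $$ (i, j)"] assms(1,2) by (simp add: add_eq_0_iff2)
qed (use assms in auto)

lemma append_rows_mult:
  assumes A: "A \<in> carrier_mat nr1 m" and B: "B \<in> carrier_mat nr2 m" and C: "C \<in> carrier_mat m k"
  shows "(A @\<^sub>r B) * C = (A * C) @\<^sub>r (B * C)"
proof -
  have C_block: "C = four_block_mat C (0\<^sub>m m 0) (0\<^sub>m 0 k) (0\<^sub>m 0 0)"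
    using C by (intro eq_matI) auto
  have "(A @\<^sub>r B) * C =
      four_block_mat A (0\<^sub>m nr1 0) B (0\<^sub>m nr2 0) * four_block_mat C (0\<^sub>m m 0) (0\<^sub>m 0 k) (0\<^sub>m 0 0)"
    unfolding append_rows_def using A B C_block by simp
  also have "\<dots> = four_block_mat (A * C + 0\<^sub>m nr1 0 * 0\<^sub>m 0 k) (A * 0\<^sub>m m 0 + 0\<^sub>m nr1 0 * 0\<^sub>m 0 0)
      (B * C + 0\<^sub>m nr2 0 * 0\<^sub>m 0 k) (B * 0\<^sub>m m 0 + 0\<^sub>m nr2 0 * 0\<^sub>m 0 0)"
    by (rule mult_four_block_mat[OF A _ B _ C]) auto
  also have "\<dots> = (A * C) @\<^sub>r (B * C)"
    unfolding append_rows_def using A B C by (intro cong_four_block_mat eq_matI) auto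
  finally show ?thesis .
qed

lemma four_block_mat_mult_append_rows:
  assumes "A \<in> carrier_mat r1 n1" "B \<in> carrier_mat r1 n2" "C \<in> carrier_mat r2 n1" "D \<in> carrier_mat r2 n2"
    and E: "E \<in> carrier_mat n1 m" and F: "F \<in> carrier_mat n2 m"
  shows "four_block_mat A B C D * (E @\<^sub>r F) = (A * E + B * F) @\<^sub>r (C * E + D * F)"
proof -
  have "four_block_mat A B C D * (E @\<^sub>r F) =
      four_block_mat A B C D * four_block_mat E (0\<^sub>m n1 0) F (0\<^sub>m n2 0)"
    unfolding append_rows_def using E F by simp
  also have "\<dots> = four_block_mat (A * E + B * F) (A * 0\<^sub>m n1 0 + B * 0\<^sub>m n2 0)
      (C * E + D * F) (C * 0\<^sub>m n1 0 + D * 0\<^sub>m n2 0)"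
    by (rule mult_four_block_mat[OF assms(1-4) E _ F]) auto
  also have "\<dots> = (A * E + B * F) @\<^sub>r (C * E + D * F)"
    unfolding append_rows_def using assms by (intro cong_four_block_mat eq_matI) auto
  finally show ?thesis .
qed

lemma append_rows_eq_append_rowsD:
  assumes "A \<in> carrier_mat p m" "B \<in> carrier_mat q m" "C \<in> carrier_mat p m" "D \<in> carrier_mat q m"
    and eq: "A @\<^sub>r B = C @\<^sub>r D"
  shows "A = C" "B = D"
proof -
  show "A = C"
  proof (rule eq_matI)
    fix i j assume "i < dim_row C" "j < dim_col C"
    then show "A $$ (i, j) = C $$ (i, j)"
      using arg_cong[OF eq, of "\<lambda>M. M $$ (i, j)"] assms(1-4) by (auto simp: append_rows_def)
  qed (use assms in auto)
  show "B = D"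
  proof (rule eq_matI)
    fix i j assume "i < dim_row D" "j < dim_col D"
    then show "B $$ (i, j) = D $$ (i, j)"
      using arg_cong[OF eq, of "\<lambda>M. M $$ (i + p, j)"] assms(1-4) by (auto simp: append_rows_def)
  qed (use assms in auto)
qed

lemma Lax_eigen_block_rows:
  fixes X P Xi Ups :: "complex mat"
  assumes X: "X \<in> carrier_mat n r" and P: "P \<in> carrier_mat n r"
    and Xi: "Xi \<in> carrier_mat r r" and Ups: "Ups \<in> carrier_mat r r"
    and eig: "Lax n r a lam X P * (Xi @\<^sub>r Ups) = (Xi @\<^sub>r Ups) * diag_of r d"
  shows "transpose_mat X * Ainv n a lam * P * Xi + transpose_mat X * Ainv n a lam * X * Ups = Xi * diag_of r d"
    and "(1\<^sub>m r - transpose_mat P * Ainv n a lam * P) * Xi - transpose_mat P * Ainv n a lam * X * Ups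
      = Ups * diag_of r d"
proof -
  have B: "Ainv n a lam \<in> carrier_mat n n"
    by (simp add: Ainv_def)
  let ?U = "transpose_mat X * Ainv n a lam * X" and ?V = "transpose_mat X * Ainv n a lam * P"
    and ?V' = "transpose_mat P * Ainv n a lam * X" and ?W = "1\<^sub>m r - transpose_mat P * Ainv n a lam * P"
  have "Lax n r a lam X P * (Xi @\<^sub>r Ups) = (?V * Xi + ?U * Ups) @\<^sub>r (?W * Xi + (- ?V') * Ups)"
    unfolding Lax_def using X P B Xi Ups by (intro four_block_mat_mult_append_rows) auto
  moreover have "(Xi @\<^sub>r Ups) * diag_of r d = (Xi * diag_of r d) @\<^sub>r (Ups * diag_of r d)"
    using Xi Ups by (intro append_rows_mult) auto
  ultimately have "(?V * Xi + ?U * Ups) @\<^sub>r (?W * Xi + (- ?V') * Ups)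
      = (Xi * diag_of r d) @\<^sub>r (Ups * diag_of r d)"
    using eig by simp
  note rows = append_rows_eq_append_rowsD[OF _ _ _ _ this, where p = r and q = r and m = r]
  have "?V * Xi + ?U * Ups = Xi * diag_of r d" "?W * Xi + (- ?V') * Ups = Ups * diag_of r d"
    by (rule rows; use X P B Xi Ups in auto)+
  moreover have "?W * Xi + (- ?V') * Ups = ?W * Xi - ?V' * Ups"
    using X P B Xi Ups by (subst minus_add_uminus_mat[where nr = r and nc = r]) auto
  ultimately show "?V * Xi + ?U * Ups = Xi * diag_of r d" "?W * Xi - ?V' * Ups = Ups * diag_of r d"
    by simp_all
qed

text \<open>The solution \<open>\<Gamma> = \<Upsilon> \<Xi>\<inverse>\<close> of the Riccati equation is symmetric because
  \<open>K = \<Xi>\<^sup>T \<Upsilon> - \<Upsilon>\<^sup>T \<Xi>\<close> is antisymmetric while \<open>K D\<close> is symmetric, which forces \<open>K = 0\<close>.\<close>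
lemma Riccati_solution_symmetric:
  fixes U V W Xi Ups Xi' :: "complex mat"
  assumes c: "U \<in> carrier_mat r r" "V \<in> carrier_mat r r" "W \<in> carrier_mat r r"
    "Xi \<in> carrier_mat r r" "Ups \<in> carrier_mat r r" "Xi' \<in> carrier_mat r r"
    and U_sym: "transpose_mat U = U" and W_sym: "transpose_mat W = W"
    and inv: "Xi * Xi' = 1\<^sub>m r" "Xi' * Xi = 1\<^sub>m r"
    and eq1: "V * Xi + U * Ups = Xi * diag_of r d"
    and eq2: "W * Xi - transpose_mat V * Ups = Ups * diag_of r d"
    and spec: "\<forall>i<r. \<forall>j<r. d i \<noteq> - d j"
  shows "transpose_mat (Ups * Xi') = Ups * Xi'"
proof -
  define D where "D = diag_of r d"
  define K where "K = transpose_mat Xi * Ups - transpose_mat Ups * Xi"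
  define R where "R = transpose_mat Xi * W * Xi - transpose_mat Xi * transpose_mat V * Ups
    - (transpose_mat Ups * V * Xi + transpose_mat Ups * U * Ups)"
  note dims = c[unfolded carrier_mat_def, simplified]
  have K: "K \<in> carrier_mat r r"
    unfolding K_def using c by auto
  have "K * D = transpose_mat Xi * (Ups * D) - transpose_mat Ups * (Xi * D)"
    unfolding K_def D_def using dims by (simp add: mat_dim_algebra)
  also have "\<dots> = R"
    unfolding R_def D_def eq1[symmetric] eq2[symmetric] using dims by (simp add: mat_dim_algebra)
  finally have KD: "K * D = R" .
  have R_sym: "transpose_mat R = R"
    unfolding R_def using dims U_sym W_sym
    by (simp add: mat_dim_algebra) (rule eq_matI, simp_all add: dims del: index_mult_mat(1))
  have K_antisym: "transpose_mat K = - K"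
    unfolding K_def using dims by (simp add: mat_dim_algebra) (rule eq_matI, auto)
  have "K * D = transpose_mat (K * D)"
    using R_sym by (simp add: KD)
  also have "\<dots> = diag_of r (\<lambda>i. - d i) * K"
    using K by (simp add: mat_dim_algebra D_def K_antisym diag_of_uminus)
  finally have "K = 0\<^sub>m r r"
    using sylvester_diag_of_eq_zero[OF K] spec unfolding D_def by metis
  have Ups_Xi: "transpose_mat Ups * Xi = transpose_mat Xi * Ups"
  proof (rule eq_matI)
    fix i j assume "i < dim_row (transpose_mat Xi * Ups)" "j < dim_col (transpose_mat Xi * Ups)"
    moreover from this have "K $$ (i, j) = 0"
      using \<open>K = 0\<^sub>m r r\<close> dims by simp
    ultimately show "(transpose_mat Ups * Xi) $$ (i, j) = (transpose_mat Xi * Ups) $$ (i, j)"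
      unfolding K_def using dims by (simp del: index_mult_mat(1))
  qed (use dims in auto)
  have "transpose_mat (Ups * Xi') = transpose_mat Xi' * (transpose_mat Ups * Xi) * Xi'"
    using dims inv by (simp add: mat_dim_algebra)
  also have "\<dots> = transpose_mat (Xi * Xi') * (Ups * Xi')"
    unfolding Ups_Xi using dims by (simp add: mat_dim_algebra)
  finally show ?thesis
    using inv dims by simp
qed

text \<open>Both identities are \<open>\<Gamma> X'\<^sup>T - P'\<^sup>T = X\<^sup>T S\<close> multiplied on the right by \<open>B X'\<close> and by \<open>B P'\<close>.\<close>
lemma branch_intertwines_Lax_blocks:
  fixes S Si B X P Gam X' P' :: "complex mat"
  assumes S: "S \<in> carrier_mat n n" and Si: "Si \<in> carrier_mat n n"
    and X: "X \<in> carrier_mat n r" and P: "P \<in> carrier_mat n r" and Gam: "Gam \<in> carrier_mat r r"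
    and S_sym: "transpose_mat S = S"
    and S_Si: "S * Si = 1\<^sub>m n" and Si_S: "Si * S = 1\<^sub>m n" and B: "B = Si * Si"
    and XX: "transpose_mat X * X = 1\<^sub>m r" and Gam_sym: "transpose_mat Gam = Gam"
    and X': "X' = Si * (P + X * Gam)" and P': "P' = - (S * X) + X' * Gam"
  shows "Gam * (transpose_mat X' * B * X') - transpose_mat P' * B * X' = transpose_mat X * B * (P + X * Gam)"
    and "Gam * (transpose_mat X' * B * P') - transpose_mat P' * B * P'
      = transpose_mat X * B * (P + X * Gam) * Gam - 1\<^sub>m r"
proof -
  define Q where "Q = P + X * Gam"
  have Q: "Q \<in> carrier_mat n r" and X'_Q: "X' = Si * Q"
    unfolding Q_def X' using X P Gam by auto
  have X'_carrier: "X' \<in> carrier_mat n r" and P'_carrier: "P' \<in> carrier_mat n r"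
    unfolding X'_Q P' using S Si X Q Gam by auto
  have B_carrier: "B \<in> carrier_mat n n"
    unfolding B using Si by simp
  note carriers = S Si X Gam Q B_carrier X'_carrier P'_carrier
  note dims = carriers[unfolded carrier_mat_def, simplified]
  have S_Si_cancel: "S * (Si * M) = M" and Si_S_cancel: "Si * (S * M) = M" if "dim_row M = n" for M
    using that dims by (simp_all add: assoc_mult_mat_dim[symmetric] S_Si Si_S)
  have row_factor: "Gam * transpose_mat X' - transpose_mat P' = transpose_mat X * S"
    unfolding P' using dims S_sym Gam_sym
    by (simp add: mat_dim_algebra) (rule eq_matI, simp_all add: dims del: index_mult_mat(1))
  have "Gam * (transpose_mat X' * B * X') - transpose_mat P' * B * X'
      = (Gam * transpose_mat X' - transpose_mat P') * (B * X')"
    using dims by (simp add: mat_dim_algebra)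
  also have "\<dots> = transpose_mat X * S * (Si * Si * (Si * Q))"
    unfolding row_factor unfolding B X'_Q ..
  also have "\<dots> = transpose_mat X * B * Q"
    unfolding B using dims by (simp add: mat_dim_algebra S_Si_cancel)
  finally show "Gam * (transpose_mat X' * B * X') - transpose_mat P' * B * X' = transpose_mat X * B * (P + X * Gam)"
    unfolding Q_def .
  have "Gam * (transpose_mat X' * B * P') - transpose_mat P' * B * P'
      = (Gam * transpose_mat X' - transpose_mat P') * (B * P')"
    using dims by (simp add: mat_dim_algebra)
  also have "\<dots> = transpose_mat X * S * (Si * Si * (- (S * X) + Si * Q * Gam))"
    unfolding row_factor unfolding B P' X'_Q ..
  also have "\<dots> = transpose_mat X * B * Q * Gam - 1\<^sub>m r"
    unfolding B using dims XX
    by (simp add: mat_dim_algebra S_Si_cancel Si_S_cancel)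
      (rule eq_matI, simp_all add: dims del: index_mult_mat(1))
  finally show "Gam * (transpose_mat X' * B * P') - transpose_mat P' * B * P'
      = transpose_mat X * B * (P + X * Gam) * Gam - 1\<^sub>m r"
    unfolding Q_def .
qed

lemma block_eigenvectors_intertwined:
  fixes U V V' W M Gam Xi Ups D :: "complex mat"
  assumes c: "U \<in> carrier_mat r r" "V \<in> carrier_mat r r" "V' \<in> carrier_mat r r" "W \<in> carrier_mat r r"
    "M \<in> carrier_mat r r" "Gam \<in> carrier_mat r r" "Xi \<in> carrier_mat r r" "Ups \<in> carrier_mat r r"
    "D \<in> carrier_mat r r"
    and row1: "Gam * U - V' = M" and row2: "Gam * V - W = M * Gam - 1\<^sub>m r"
    and eq1: "V * Xi + U * Ups = Xi * D" and eq2: "(1\<^sub>m r - W) * Xi - V' * Ups = Ups * D"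
  shows "(Ups + Gam * Xi) * D = M * (Ups + Gam * Xi)"
proof -
  note dims = c[unfolded carrier_mat_def, simplified]
  have "(Ups + Gam * Xi) * D = Ups * D + Gam * (Xi * D)"
    using dims by (simp add: mat_dim_algebra)
  also have "\<dots> = (Gam * V - W + 1\<^sub>m r) * Xi + (Gam * U - V') * Ups"
    unfolding eq1[symmetric] eq2[symmetric] using dims
    by (simp add: mat_dim_algebra) (rule eq_matI, simp_all add: dims del: index_mult_mat(1))
  also have "\<dots> = M * (Ups + Gam * Xi)"
    unfolding row1 row2 using dims
    by (simp add: mat_dim_algebra) (rule eq_matI, simp_all add: dims del: index_mult_mat(1))
  finally show ?thesis .
qed

lemma intertwiner_eq_zero:
  fixes M Xi Xi' N :: "complex mat"
  assumes M: "M \<in> carrier_mat r r" and Xi: "Xi \<in> carrier_mat r r" and Xi': "Xi' \<in> carrier_mat r r"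
    and N: "N \<in> carrier_mat r m"
    and inv: "Xi * Xi' = 1\<^sub>m r" "Xi' * Xi = 1\<^sub>m r"
    and M_eig: "M * Xi = Xi * diag_of r e"
    and N_intertwines: "N * diag_of m d = M * N"
    and spec: "\<forall>i<r. \<forall>j<m. e i \<noteq> d j"
  shows "N = 0\<^sub>m r m"
proof -
  note carriers = M Xi Xi' N
  note dims = carriers[unfolded carrier_mat_def, simplified]
  have M_diag: "M = Xi * diag_of r e * Xi'"
    using dims inv by (simp flip: M_eig add: mat_dim_algebra)
  have "Xi' * N * diag_of m d = Xi' * Xi * diag_of r e * (Xi' * N)"
    unfolding M_diag using dims by (simp add: mat_dim_algebra N_intertwines M_diag)
  also have "\<dots> = diag_of r e * (Xi' * N)"
    using dims inv by simp
  finally have "Xi' * N = 0\<^sub>m r m"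
    using dims spec by (intro sylvester_diag_of_eq_zero) auto
  then have "Xi * (Xi' * N) = 0\<^sub>m r m"
    using dims by simp
  then show ?thesis
    using dims inv by (simp add: assoc_mult_mat_dim[symmetric])
qed

lemma branch_step_negated_Gamma:
  fixes S Si X P Gam X' P' :: "complex mat"
  assumes S: "S \<in> carrier_mat n n" and Si: "Si \<in> carrier_mat n n"
    and X: "X \<in> carrier_mat n r" and P: "P \<in> carrier_mat n r" and Gam: "Gam \<in> carrier_mat r r"
    and S_Si: "S * Si = 1\<^sub>m n" and Si_S: "Si * S = 1\<^sub>m n"
    and X': "X' = Si * (P + X * Gam)" and P': "P' = - (S * X) + X' * Gam"
  shows "Si * (P' + X' * (- Gam)) = - X" and "- (S * X') + (- X) * (- Gam) = - P"
proof -
  note carriers = S Si X P Gam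
  note dims = carriers[unfolded carrier_mat_def, simplified]
  have "P' + X' * (- Gam) = - (S * X)"
    unfolding P' using dims X'
    by (intro eq_matI) (simp_all del: index_mult_mat(1))
  then show "Si * (P' + X' * (- Gam)) = - X"
    using dims Si_S by (simp add: assoc_mult_mat_dim[symmetric])
  have "S * X' = P + X * Gam"
    unfolding X' using dims S_Si by (simp add: assoc_mult_mat_dim[symmetric])
  then show "- (S * X') + (- X) * (- Gam) = - P"
    using dims by (intro eq_matI) (simp_all del: index_mult_mat(1))
qed

lemma diagonal_sqrt_Amat:
  assumes lam: "\<forall>i<n. lam \<noteq> a i" and S: "S \<in> carrier_mat n n" and "diagonal_mat S"
    and S_sq: "S * S = Amat n a lam"
  shows "diag_inv S \<in> carrier_mat n n" and "S * diag_inv S = 1\<^sub>m n" and "diag_inv S * S = 1\<^sub>m n"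
    and "Ainv n a lam = diag_inv S * diag_inv S"
    and "transpose_mat S = S"
proof -
  define s where "s i = S $$ (i, i)" for i
  have S_diag: "S = diag_of n s"
    unfolding s_def using diagonal_mat_eq_diag_of[OF S \<open>diagonal_mat S\<close>] .
  have Si_diag: "diag_inv S = diag_of n (\<lambda>i. 1 / s i)"
    unfolding diag_inv_def diag_of_def s_def using S by auto
  have s_sq: "s i * s i = complex_of_real (lam - a i)" if "i < n" for i
    using arg_cong[OF S_sq, of "\<lambda>M. M $$ (i, i)"] that
    unfolding S_diag diag_of_mult_diag_of by (simp add: Amat_def diag_of_def)
  then have s_nonzero: "s i \<noteq> 0" if "i < n" for i
    using lam that by fastforce
  show "diag_inv S \<in> carrier_mat n n" "transpose_mat S = S"
    unfolding Si_diag by (simp_all add: S_diag)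
  show "S * diag_inv S = 1\<^sub>m n" "diag_inv S * S = 1\<^sub>m n"
    unfolding Si_diag unfolding S_diag diag_of_mult_diag_of using s_nonzero by (auto intro: diag_of_eq_one_mat)
  show "Ainv n a lam = diag_inv S * diag_inv S"
    unfolding Si_diag diag_of_mult_diag_of using s_sq
    by (intro eq_matI) (auto simp: Ainv_def diag_of_def)
qed

lemma neumann_branchE:
  assumes "neumann_branch n r a lam S w X P X' P'" and X: "X \<in> carrier_mat n r" and P: "P \<in> carrier_mat n r"
  obtains Xi Ups Xi' where "Xi \<in> carrier_mat r r" "Ups \<in> carrier_mat r r" "Xi' \<in> carrier_mat r r"
    "Xi * Xi' = 1\<^sub>m r" "Xi' * Xi = 1\<^sub>m r"
    "transpose_mat X * Ainv n a lam * P * Xi + transpose_mat X * Ainv n a lam * X * Ups = Xi * diag_of r w"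
    "(1\<^sub>m r - transpose_mat P * Ainv n a lam * P) * Xi - transpose_mat P * Ainv n a lam * X * Ups
      = Ups * diag_of r w"
    "X' = diag_inv S * (P + X * (Ups * Xi'))" "P' = - (S * X) + X' * (Ups * Xi')"
  using assms(1) Lax_eigen_block_rows[OF X P] unfolding neumann_branch_def Let_def by metis

lemma transpose_Ainv [simp]: "transpose_mat (Ainv n a lam) = Ainv n a lam"
  unfolding Ainv_def by (rule eq_matI) auto

lemma neumann_branch_closed_loop:
  assumes branch: "neumann_branch n r a lam S w X P X' P'"
    and X: "X \<in> carrier_mat n r" and P: "P \<in> carrier_mat n r"
    and spec: "\<forall>i<r. \<forall>j<r. w i \<noteq> - w j"
  obtains Gam Xi Xi' where "Gam \<in> carrier_mat r r" "transpose_mat Gam = Gam"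
    "Xi \<in> carrier_mat r r" "Xi' \<in> carrier_mat r r" "Xi * Xi' = 1\<^sub>m r" "Xi' * Xi = 1\<^sub>m r"
    "transpose_mat X * Ainv n a lam * (P + X * Gam) * Xi = Xi * diag_of r w"
    "X' = diag_inv S * (P + X * Gam)" "P' = - (S * X) + X' * Gam"
proof -
  define B where "B = Ainv n a lam"
  obtain Xi Ups Xi' where c: "Xi \<in> carrier_mat r r" "Ups \<in> carrier_mat r r" "Xi' \<in> carrier_mat r r"
    and inv: "Xi * Xi' = 1\<^sub>m r" "Xi' * Xi = 1\<^sub>m r"
    and eq1: "transpose_mat X * B * P * Xi + transpose_mat X * B * X * Ups = Xi * diag_of r w"
    and eq2: "(1\<^sub>m r - transpose_mat P * B * P) * Xi - transpose_mat P * B * X * Ups = Ups * diag_of r w"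
    and X'P': "X' = diag_inv S * (P + X * (Ups * Xi'))" "P' = - (S * X) + X' * (Ups * Xi')"
    using neumann_branchE[OF branch X P] unfolding B_def by metis
  have B: "B \<in> carrier_mat n n" "transpose_mat B = B"
    unfolding B_def by (simp add: Ainv_def, simp)
  note carriers = X P B(1) c
  note dims = carriers[unfolded carrier_mat_def, simplified]
  have "transpose_mat (Ups * Xi') = Ups * Xi'"
  proof (rule Riccati_solution_symmetric[OF _ _ _ c _ _ inv eq1])
    show "(1\<^sub>m r - transpose_mat P * B * P) * Xi - transpose_mat (transpose_mat X * B * P) * Ups
        = Ups * diag_of r w"
      using eq2 dims B(2) by (simp add: mat_dim_algebra)
    show "transpose_mat (transpose_mat X * B * X) = transpose_mat X * B * X"
      "transpose_mat (1\<^sub>m r - transpose_mat P * B * P) = 1\<^sub>m r - transpose_mat P * B * P"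
      using dims B(2) by (simp_all add: mat_dim_algebra)
  qed (use X P B(1) spec in auto)
  moreover have "transpose_mat X * B * (P + X * (Ups * Xi')) * Xi = Xi * diag_of r w"
    unfolding eq1[symmetric] using dims inv by (simp add: mat_dim_algebra)
  ultimately show thesis
    using that[of "Ups * Xi'"] c inv X'P' unfolding B_def by auto
qed

lemma neumann_branch_after_closed_loop:
  fixes X P Gam Xi Xi' X' P' X'' P'' :: "complex mat"
  assumes lam: "\<forall>i<n. lam \<noteq> a i"
    and S: "S \<in> carrier_mat n n" and "diagonal_mat S" and "S * S = Amat n a lam"
    and X: "X \<in> carrier_mat n r" and P: "P \<in> carrier_mat n r" and XX: "transpose_mat X * X = 1\<^sub>m r"
    and Gam: "Gam \<in> carrier_mat r r" "transpose_mat Gam = Gam"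
    and Xi: "Xi \<in> carrier_mat r r" "Xi' \<in> carrier_mat r r" "Xi * Xi' = 1\<^sub>m r" "Xi' * Xi = 1\<^sub>m r"
    and closed_loop: "transpose_mat X * Ainv n a lam * (P + X * Gam) * Xi = Xi * diag_of r e"
    and X': "X' = diag_inv S * (P + X * Gam)" and P': "P' = - (S * X) + X' * Gam"
    and spec: "\<forall>i<r. \<forall>j<r. e i \<noteq> w j"
    and branch: "neumann_branch n r a lam S w X' P' X'' P''"
  shows "X'' = - X \<and> P'' = - P"
proof -
  define Si B where "Si = diag_inv S" and "B = Ainv n a lam"
  note sqrt = diagonal_sqrt_Amat[OF lam S \<open>diagonal_mat S\<close> \<open>S * S = Amat n a lam\<close>, folded Si_def B_def]
  have B: "B \<in> carrier_mat n n"
    unfolding B_def by (simp add: Ainv_def)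
  have X'_Si: "X' = Si * (P + X * Gam)"
    unfolding X' Si_def ..
  have X'P': "X' \<in> carrier_mat n r" "P' \<in> carrier_mat n r"
    unfolding P' X'_Si using sqrt(1) S X P Gam by auto
  obtain Xi2 Ups2 Xi2' where Xi2: "Xi2 \<in> carrier_mat r r" "Ups2 \<in> carrier_mat r r" "Xi2' \<in> carrier_mat r r"
    "Xi2 * Xi2' = 1\<^sub>m r" "Xi2' * Xi2 = 1\<^sub>m r"
    and eqs: "transpose_mat X' * B * P' * Xi2 + transpose_mat X' * B * X' * Ups2 = Xi2 * diag_of r w"
      "(1\<^sub>m r - transpose_mat P' * B * P') * Xi2 - transpose_mat P' * B * X' * Ups2 = Ups2 * diag_of r w"
    and X'': "X'' = Si * (P' + X' * (Ups2 * Xi2'))" and P'': "P'' = - (S * X') + X'' * (Ups2 * Xi2')"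
    unfolding Si_def B_def by (rule neumann_branchE[OF branch X'P'])
  note rows = branch_intertwines_Lax_blocks[OF S sqrt(1) X P Gam(1) sqrt(5,2,3,4) XX Gam(2)
      X'_Si P']
  have "(Ups2 + Gam * Xi2) * diag_of r w = transpose_mat X * B * (P + X * Gam) * (Ups2 + Gam * Xi2)"
    by (rule block_eigenvectors_intertwined[OF _ _ _ _ _ Gam(1) Xi2(1,2) _ rows eqs])
      (use X'P' X P B Gam in auto)
  then have "Ups2 + Gam * Xi2 = 0\<^sub>m r r"
    using closed_loop[folded B_def]
    by (intro intertwiner_eq_zero[OF _ Xi(1,2) _ Xi(3,4)]) (use X P B Gam Xi2 spec in auto)
  then have "Ups2 = - (Gam * Xi2)"
    using Gam Xi2 by (intro add_eq_0_mat_imp_eq_uminus[of _ r r]) auto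
  then have Gam2: "Ups2 * Xi2' = - Gam"
    using Gam Xi2 by (simp add: assoc_mult_mat[of Gam r r Xi2 r Xi2' r])
  note inverse = branch_step_negated_Gamma[OF S sqrt(1) X P Gam(1) sqrt(2,3) X'_Si P']
  have "X'' = - X"
    unfolding X'' Gam2 by (rule inverse(1))
  moreover have "P'' = - P"
    unfolding P'' Gam2 \<open>X'' = - X\<close> by (rule inverse(2))
  ultimately show ?thesis ..
qed

lemma orthonormal_map_mat_of_real:
  assumes "X \<in> carrier_mat n r" and "transpose_mat X * X = 1\<^sub>m r"
  shows "transpose_mat (map_mat complex_of_real X) * map_mat complex_of_real X = 1\<^sub>m r"
proof -
  have "transpose_mat (map_mat complex_of_real X) * map_mat complex_of_real X
      = map_mat complex_of_real (transpose_mat X * X)"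
    using assms(1) by (simp add: of_real_hom.mat_hom_mult map_mat_transpose)
  then show ?thesis
    using assms(2) by (simp add: of_real_hom.mat_hom_one)
qed

theorem theorem6p4:
  fixes n r :: nat and a :: "nat \<Rightarrow> real" and lam :: real and S :: "complex mat"
    and w :: "nat \<Rightarrow> complex" and X P :: "real mat"
    and X1 P1 X2 P2 :: "complex mat"
  assumes "1 \<le> r" and "r \<le> n"
    and "\<forall>i<n. lam \<noteq> a i"
    and "S \<in> carrier_mat n n" and "diagonal_mat S" and "S * S = Amat n a lam"
    and "X \<in> carrier_mat n r" and "P \<in> carrier_mat n r"
    and "transpose_mat X * X = 1\<^sub>m r"
    and "transpose_mat X * P + transpose_mat P * X = 0\<^sub>m r r"
    and "\<forall>i<r. \<forall>j<r. i \<noteq> j \<longrightarrow> w i \<noteq> w j"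
    and "\<forall>i<r. \<forall>j<r. w i \<noteq> - w j"
    and "neumann_branch n r a lam S (\<lambda>i. - w i)
           (map_mat complex_of_real X) (map_mat complex_of_real P) X1 P1"
    and "neumann_branch n r a lam S w X1 P1 X2 P2"
  shows "X2 = - map_mat complex_of_real X \<and> P2 = - map_mat complex_of_real P"
proof -
  define Xc Pc where "Xc = map_mat complex_of_real X" and "Pc = map_mat complex_of_real P"
  have Xc: "Xc \<in> carrier_mat n r" and Pc: "Pc \<in> carrier_mat n r"
    using assms(7,8) by (auto simp: Xc_def Pc_def)
  have opposite_spec: "\<forall>i<r. \<forall>j<r. - w i \<noteq> - (- w j)" "\<forall>i<r. \<forall>j<r. - w i \<noteq> w j"
    using assms(12) by (metis minus_minus)+
  obtain Gam Xi Xi' where "Gam \<in> carrier_mat r r" "transpose_mat Gam = Gam"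
    "Xi \<in> carrier_mat r r" "Xi' \<in> carrier_mat r r" "Xi * Xi' = 1\<^sub>m r" "Xi' * Xi = 1\<^sub>m r"
    "transpose_mat Xc * Ainv n a lam * (Pc + Xc * Gam) * Xi = Xi * diag_of r (\<lambda>i. - w i)"
    "X1 = diag_inv S * (Pc + Xc * Gam)" "P1 = - (S * Xc) + X1 * Gam"
    by (rule neumann_branch_closed_loop[OF assms(13)[folded Xc_def Pc_def] Xc Pc opposite_spec(1)])
  from neumann_branch_after_closed_loop[OF assms(3-6) Xc Pc _ this opposite_spec(2) assms(14)]
  show ?thesis
    unfolding Xc_def Pc_def using assms(7,9) by (simp add: orthonormal_map_mat_of_real)
qed

end
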